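(* Let $\{(X_j,\mathcal R_j,\mu_j):j\in\Lambda\}$ be a family of probability measure spaces indexed by a set $\Lambda$, such that each covering ring $\mathcal R_j$ is complete relative to $\mu_j$ (i.e. $\mathcal R_j=\mathcal R_{\mu_j}$) and each $(X_j,\tau_{\mathcal R_j})$ is Hausdorff. Let $X:=\prod_{j\in\Lambda}X_j$ with the product (Tychonoff) topology, each $X_j$ carrying the topology $\tau_{\mathcal R_j}$, let $\pi_j:X\to X_j$ be the projections, and let $\mathcal R$ be the ring $\bigcup_{j_1,\dots,j_n\in\Lambda,\,n\in\mathbf N}\bigcap_{l=1}^n\pi_{j_l}^{-1}(\mathcal R_{j_l})$ of cylinder sets. Let $\mu:\mathcal R\to\mathbf K$ be a cylindrical distribution, i.e. $\mu\big(\bigcap_{l=1}^n\pi_{j_l}^{-1}(A_l)\big)=\prod_{l=1}^n\mu_{j_l}(A_l)$ for all pairwise distinct $j_1,\dots,j_n\in\Lambda$, $n\in\mathbf N$, and $A_l\in\mathcal R_{j_l}$. Then $\mu$ has an extension to a probability measure $\mu$ on $(X,\mathcal R_\mu)$, where $\mathcal R_\mu$ is the completion of $\mathcal R$ relative to $\mu$.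
   Context: $\mathbf K$ is a field with a nontrivial non-Archimedean valuation $|\cdot|$, $\mathbf K\supset\mathbf Q_p$, complete as an ultrametric space. A covering ring of a set $X$ is a family of subsets closed under finite unions, intersections and differences whose union is $X$; it defines the topology $\tau_{\mathcal R}$ on $X$ with base $\mathcal R$. A subfamily $\mathcal S\subset\mathcal R$ is shrinking if for all $A,B\in\mathcal S$ there is $C\in\mathcal S$ with $C\subset A\cap B$. A measure $\mu:\mathcal R\to\mathbf K$ is finitely additive on disjoint sets, has $\|A\|_\mu:=\sup\{|\mu(B)|:B\in\mathcal R,B\subset A\}<\infty$ for all $A\in\mathcal R$, and satisfies: for every shrinking $\mathcal S\subset\mathcal R$ with empty intersection and every $\epsilon>0$ there is $B\in\mathcal S$ with $|\mu(A)|\le\epsilon$ for all $A\in\mathcal S$, $A\subset B$. A probability measure satisfies $\mu(X)=1$ and $\|\mu\|:=\|X\|_\mu=1$. Put $N_\mu(x):=\inf_{x\in U\in\mathcal R}\|U\|_\mu$. A function $f:X\to\mathbf K$ is $\mu$-integrable if there are $\mathcal R$-step functions $f_n$ (finite $\mathbf K$-linear combinations of characteristic functions of elements of $\mathcal R$) with $\sup_{x\in X}|f(x)-f_n(x)|N_\mu(x)\to0$; the completion $\mathcal R_\mu\supset\mathcal R$ is the ring of subsets $A\subset X$ whose characteristic functions are $\mu$-integrable, and $\mu$ extends to it. *)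

theory Defs
  imports "HOL-Analysis.Analysis" "HOL-Computational_Algebra.Primes"
begin

text \<open>The predicate below says: av is a nontrivial non-Archimedean absolute value, K is complete
 for it, and K contains Q_p, i.e. av restricted to the integers is the p-adic absolute value
 (this determines av on Q, and by completeness the closure of Q in K is Q_p).\<close>

definition nonarch_field_over_Qp :: "nat \<Rightarrow> ('k::field \<Rightarrow> real) \<Rightarrow> bool" where
  "nonarch_field_over_Qp p av \<longleftrightarrow>
     prime p \<and>
     (\<forall>x. 0 \<le> av x) \<and> (\<forall>x. av x = 0 \<longleftrightarrow> x = 0) \<and>
     (\<forall>x y. av (x * y) = av x * av y) \<and>
     (\<forall>x y. av (x + y) \<le> max (av x) (av y)) \<and>
     (\<exists>x. av x \<noteq> 0 \<and> av x \<noteq> 1) \<and>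
     (\<forall>s::nat \<Rightarrow> 'k.
        (\<forall>e>0. \<exists>N. \<forall>m\<ge>N. \<forall>n\<ge>N. av (s m - s n) < e) \<longrightarrow>
        (\<exists>L. \<forall>e>0. \<exists>N. \<forall>n\<ge>N. av (s n - L) < e)) \<and>
     (\<forall>n::int. n \<noteq> 0 \<longrightarrow> av (of_int n) = inverse (real p ^ multiplicity (int p) n))"

definition ring_closed :: "'a set set \<Rightarrow> bool" where
  "ring_closed R \<longleftrightarrow> (\<forall>A\<in>R. \<forall>B\<in>R. A \<union> B \<in> R \<and> A \<inter> B \<in> R \<and> A - B \<in> R)"

definition covering_ring :: "'a set \<Rightarrow> 'a set set \<Rightarrow> bool" where
  "covering_ring X R \<longleftrightarrow> R \<subseteq> Pow X \<and> ring_closed R \<and> \<Union>R = X"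

definition ring_topology :: "'a set set \<Rightarrow> 'a topology" where
  "ring_topology R = topology_generated_by R"

definition shrinking :: "'a set set \<Rightarrow> bool" where
  "shrinking S \<longleftrightarrow> (\<forall>A\<in>S. \<forall>B\<in>S. \<exists>C\<in>S. C \<subseteq> A \<inter> B)"

definition set_norm :: "('k \<Rightarrow> real) \<Rightarrow> 'a set set \<Rightarrow> ('a set \<Rightarrow> 'k) \<Rightarrow> 'a set \<Rightarrow> real" where
  "set_norm av R mu A = Sup {av (mu B) | B. B \<in> R \<and> B \<subseteq> A}"

definition is_measure :: "('k::field \<Rightarrow> real) \<Rightarrow> 'a set \<Rightarrow> 'a set set \<Rightarrow> ('a set \<Rightarrow> 'k) \<Rightarrow> bool" where
  "is_measure av X R mu \<longleftrightarrow>
     covering_ring X R \<and>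
     (\<forall>A\<in>R. \<forall>B\<in>R. A \<inter> B = {} \<longrightarrow> mu (A \<union> B) = mu A + mu B) \<and>
     (\<forall>A\<in>R. bdd_above {av (mu B) | B. B \<in> R \<and> B \<subseteq> A}) \<and>
     (\<forall>S. S \<subseteq> R \<and> shrinking S \<and> \<Inter>S = {} \<longrightarrow>
        (\<forall>e>0. \<exists>B\<in>S. \<forall>A\<in>S. A \<subseteq> B \<longrightarrow> av (mu A) \<le> e))"

definition is_prob_measure :: "('k::field \<Rightarrow> real) \<Rightarrow> 'a set \<Rightarrow> 'a set set \<Rightarrow> ('a set \<Rightarrow> 'k) \<Rightarrow> bool" where
  "is_prob_measure av X R mu \<longleftrightarrow>
     is_measure av X R mu \<and> X \<in> R \<and> mu X = 1 \<and> set_norm av R mu X = 1"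

definition Nmu :: "('k \<Rightarrow> real) \<Rightarrow> 'a set set \<Rightarrow> ('a set \<Rightarrow> 'k) \<Rightarrow> 'a \<Rightarrow> real" where
  "Nmu av R mu x = Inf {set_norm av R mu U | U. U \<in> R \<and> x \<in> U}"

definition step_function :: "'a set set \<Rightarrow> ('a \<Rightarrow> 'k::field) \<Rightarrow> bool" where
  "step_function R f \<longleftrightarrow>
     (\<exists>(n::nat) (c::nat \<Rightarrow> 'k) (A::nat \<Rightarrow> 'a set). (\<forall>i<n. A i \<in> R) \<and>
        f = (\<lambda>x. \<Sum>i<n. c i * of_bool (x \<in> A i)))"

definition mu_integrable :: "('k::field \<Rightarrow> real) \<Rightarrow> 'a set \<Rightarrow> 'a set set \<Rightarrow> ('a set \<Rightarrow> 'k) \<Rightarrow> ('a \<Rightarrow> 'k) \<Rightarrow> bool" where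
  "mu_integrable av X R mu f \<longleftrightarrow>
     (\<exists>fs::nat \<Rightarrow> 'a \<Rightarrow> 'k. (\<forall>n. step_function R (fs n)) \<and>
        (\<forall>e>0. \<exists>N. \<forall>n\<ge>N. \<forall>x\<in>X. av (f x - fs n x) * Nmu av R mu x \<le> e))"

definition completion :: "('k::field \<Rightarrow> real) \<Rightarrow> 'a set \<Rightarrow> 'a set set \<Rightarrow> ('a set \<Rightarrow> 'k) \<Rightarrow> 'a set set" where
  "completion av X R mu = {A. A \<subseteq> X \<and> mu_integrable av X R mu (\<lambda>x. of_bool (x \<in> A))}"

definition cylinders :: "'i set \<Rightarrow> ('i \<Rightarrow> 'a set) \<Rightarrow> ('i \<Rightarrow> 'a set set) \<Rightarrow> ('i \<Rightarrow> 'a) set set" where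
  "cylinders L Xs Rs =
     {PiE L Xs \<inter> (\<Inter>j\<in>J. {x. x j \<in> A j}) | J A. finite J \<and> J \<subseteq> L \<and> (\<forall>j\<in>J. A j \<in> Rs j)}"

definition ring_generated :: "'a set set \<Rightarrow> 'a set set" where
  "ring_generated C = \<Inter>{R. C \<subseteq> R \<and> ring_closed R}"

definition cylinder_ring :: "'i set \<Rightarrow> ('i \<Rightarrow> 'a set) \<Rightarrow> ('i \<Rightarrow> 'a set set) \<Rightarrow> ('i \<Rightarrow> 'a) set set" where
  "cylinder_ring L Xs Rs = ring_generated (cylinders L Xs Rs)"

end

theory Submission
  imports Defs
begin

text \<open>Continuity of the cylindrical distribution \<open>mu\<close> is proved by contradiction with an
  ultrafilter. If the members of a shrinking family \<open>S\<close> with empty intersection kept containing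
  cylinder-ring sets of value \<open>> e\<close>, an ultrafilter \<open>U\<close> containing \<open>S\<close> and the complements of all
  \<open>e\<close>-small sets exists. Its image under each projection is an ultrafilter on \<open>X\<^sub>j\<close> whose members
  in \<open>R\<^sub>j\<close> all have norm \<open>> e\<close>, and continuity of \<open>mu\<^sub>j\<close> forces them to share a point \<open>x\<^sub>j\<close>.
  The point \<open>(x\<^sub>j)\<close> then lies in every member of \<open>S\<close>, a contradiction.

  The extension to the completion assigns to \<open>A\<close> the limit of \<open>mu B\<close> over sets \<open>B\<close> of the ring
  that agree with \<open>A\<close> outside \<open>{N \<le> d}\<close>, \<open>d \<rightarrow> 0\<close>: these values form a Cauchy net by the
  ultrametric inequality, and \<open>K\<close> is complete. The same ultrafilter argument, applied to a single
  space, transfers continuity to the completion.\<close>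

section \<open>Non-Archimedean absolute values\<close>

locale nonarch_abs =
  fixes av :: "'k::field \<Rightarrow> real"
  assumes av_nonneg: "\<And>x. 0 \<le> av x"
    and av_eq_0_iff: "\<And>x. av x = 0 \<longleftrightarrow> x = 0"
    and av_mult: "\<And>x y. av (x * y) = av x * av y"
    and av_add_le_max: "\<And>x y. av (x + y) \<le> max (av x) (av y)"
    and av_complete: "\<And>s::nat \<Rightarrow> 'k. (\<forall>e>0. \<exists>N. \<forall>m\<ge>N. \<forall>n\<ge>N. av (s m - s n) < e) \<Longrightarrow>
        \<exists>l. \<forall>e>0. \<exists>N. \<forall>n\<ge>N. av (s n - l) < e"
begin

lemma av_0 [simp]: "av 0 = 0"
  using av_eq_0_iff by simp

lemma av_1 [simp]: "av 1 = 1"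
proof -
  have "av 1 = av 1 * av 1" using av_mult[of 1 1] by simp
  moreover have "av 1 \<noteq> 0" using av_eq_0_iff by simp
  ultimately show ?thesis by (metis mult_cancel_left1)
qed

lemma av_uminus [simp]: "av (- x) = av x"
proof -
  have "(av (-1) - 1) * (av (-1) + 1) = 0"
    using av_mult[of "-1" "-1"] by (simp add: algebra_simps)
  moreover have "av (-1) + 1 > 0" using av_nonneg[of "-1"] by simp
  ultimately have "av (-1) = 1" by simp
  then show ?thesis using av_mult[of "-1" x] by simp
qed

lemma av_minus_commute: "av (x - y) = av (y - x)"
  by (metis av_uminus minus_diff_eq)

lemma av_diff_le_max: "av (x - y) \<le> max (av x) (av y)"
  using av_add_le_max[of x "-y"] by simp

lemma av_diff_triangle: "av (a - c) \<le> max (av (a - b)) (av (b - c))"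
  using av_add_le_max[of "a - b" "b - c"] by simp

lemma eq_0_if_av_le_all_pos:
  assumes "\<And>d. d > 0 \<Longrightarrow> av x \<le> d" shows "x = 0"
proof -
  have "av x \<le> 0 + d" if "d > 0" for d using assms[OF that] by simp
  then have "av x \<le> 0" by (rule field_le_epsilon)
  then show ?thesis using av_nonneg[of x] av_eq_0_iff by simp
qed

lemma av_sum_le:
  "finite I \<Longrightarrow> 0 \<le> b \<Longrightarrow> (\<And>i. i \<in> I \<Longrightarrow> av (f i) \<le> b) \<Longrightarrow> av (sum f I) \<le> b"
proof (induction I rule: finite_induct)
  case (insert a F)
  then have "av (f a) \<le> b" "av (sum f F) \<le> b" by auto
  then show ?case using av_add_le_max[of "f a" "sum f F"] insert(1,2) by simp
qed simp

lemma av_prod: "finite I \<Longrightarrow> av (prod f I) = (\<Prod>i\<in>I. av (f i))"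
  by (induction I rule: finite_induct) (auto simp: av_mult)

lemma av_prod_le_1: "finite I \<Longrightarrow> (\<And>i. i \<in> I \<Longrightarrow> av (f i) \<le> 1) \<Longrightarrow> av (prod f I) \<le> 1"
  by (simp add: av_prod prod_le_1 av_nonneg)

end

lemma nonarch_abs_if_over_Qp: "nonarch_field_over_Qp p av \<Longrightarrow> nonarch_abs av"
  unfolding nonarch_field_over_Qp_def nonarch_abs_def by (elim conjE) (intro conjI; assumption)

lemma inverse_Suc_le: "M \<le> n \<Longrightarrow> 1 / real (Suc n) \<le> inverse (Suc M)"
  by (simp add: inverse_eq_divide frac_le)

section \<open>Ultrafilters\<close>

definition fip :: "'a set \<Rightarrow> 'a set set \<Rightarrow> bool" where
  "fip X U \<longleftrightarrow> (\<forall>G. finite G \<and> G \<subseteq> U \<longrightarrow> X \<inter> \<Inter>G \<noteq> {})"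

definition ultrafilter_on :: "'a set \<Rightarrow> 'a set set \<Rightarrow> bool" where
  "ultrafilter_on X U \<longleftrightarrow> fip X U \<and> (\<forall>E. E \<subseteq> X \<longrightarrow> E \<in> U \<or> X - E \<in> U)"

lemma fipD: "fip X U \<Longrightarrow> finite G \<Longrightarrow> G \<subseteq> U \<Longrightarrow> X \<inter> \<Inter>G \<noteq> {}"
  unfolding fip_def by blast

lemma fip_Union_chain:
  assumes "C \<noteq> {}" "subset.chain A C" "\<And>Z. Z \<in> C \<Longrightarrow> fip X Z"
  shows "fip X (\<Union>C)"
  unfolding fip_def
proof (intro allI impI)
  fix G assume G: "finite G \<and> G \<subseteq> \<Union>C"
  then obtain Z where "Z \<in> C" "G \<subseteq> Z"
    using finite_subset_Union_chain[of G C A] assms(1,2) by blast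
  then show "X \<inter> \<Inter>G \<noteq> {}" using fipD[OF assms(3)] G by blast
qed

lemma fip_insert_or_insert_compl:
  assumes "fip X M" shows "fip X (insert E M) \<or> fip X (insert (X - E) M)"
proof (rule ccontr)
  assume "\<not> ?thesis"
  then have "\<not> fip X (insert E M)" "\<not> fip X (insert (X - E) M)" by simp_all
  then obtain G G' where G: "finite G" "G \<subseteq> insert E M" "X \<inter> \<Inter>G = {}"
    and G': "finite G'" "G' \<subseteq> insert (X - E) M" "X \<inter> \<Inter>G' = {}"
    unfolding fip_def by auto
  have "finite ((G - {E}) \<union> (G' - {X - E}))" "(G - {E}) \<union> (G' - {X - E}) \<subseteq> M"
    using G(1,2) G'(1,2) by auto
  then have "X \<inter> \<Inter>((G - {E}) \<union> (G' - {X - E})) \<noteq> {}"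
    by (rule fipD[OF assms])
  then obtain x where x: "x \<in> X" "\<And>g. g \<in> G - {E} \<Longrightarrow> x \<in> g" "\<And>g. g \<in> G' - {X - E} \<Longrightarrow> x \<in> g"
    by blast
  show False
  proof (cases "x \<in> E")
    case True
    then have "x \<in> \<Inter>G" using x(2) by blast
    then show False using G(3) x(1) by blast
  next
    case False
    then have "x \<in> \<Inter>G'" using x(1,3) by blast
    then show False using G'(3) x(1) by blast
  qed
qed

lemma ultrafilter_on_extends:
  assumes "fip X B"
  obtains U where "ultrafilter_on X U" "B \<subseteq> U"
proof -
  let ?A = "{U. fip X U \<and> B \<subseteq> U}"
  have "\<exists>M\<in>?A. \<forall>Z\<in>?A. M \<subseteq> Z \<longrightarrow> Z = M"
  proof (rule subset_Zorn_nonempty)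
    show "?A \<noteq> {}" using assms by blast
  next
    fix C assume "C \<noteq> {}" "subset.chain ?A C"
    then show "\<Union>C \<in> ?A"
      using fip_Union_chain[of C ?A X] unfolding subset.chain_def by blast
  qed
  then obtain M where "M \<in> ?A" and max_M: "\<forall>Z\<in>?A. M \<subseteq> Z \<longrightarrow> Z = M" ..
  then have M: "fip X M" "B \<subseteq> M" by simp_all
  have maximal: "Z = M" if "fip X Z" "M \<subseteq> Z" for Z
    using max_M that M(2) by simp
  have "E \<in> M \<or> X - E \<in> M" for E
  proof -
    consider "fip X (insert E M)" | "fip X (insert (X - E) M)"
      using fip_insert_or_insert_compl[OF M(1)] by blast
    then show ?thesis
    proof cases
      case 1
      then show ?thesis using maximal[of "insert E M"] by blast
    next
      case 2
      then show ?thesis using maximal[of "insert (X - E) M"] by blast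
    qed
  qed
  then show ?thesis using that M unfolding ultrafilter_on_def by blast
qed

lemma ultrafilter_on_fip: "ultrafilter_on X U \<Longrightarrow> finite G \<Longrightarrow> G \<subseteq> U \<Longrightarrow> X \<inter> \<Inter>G \<noteq> {}"
  unfolding ultrafilter_on_def using fipD by blast

lemma ultrafilter_on_Int_ne: "ultrafilter_on X U \<Longrightarrow> A \<in> U \<Longrightarrow> B \<in> U \<Longrightarrow> X \<inter> A \<inter> B \<noteq> {}"
  using ultrafilter_on_fip[of X U "{A, B}"] by auto

lemma ultrafilter_on_compl: "ultrafilter_on X U \<Longrightarrow> E \<subseteq> X \<Longrightarrow> E \<notin> U \<Longrightarrow> X - E \<in> U"
  unfolding ultrafilter_on_def by blast

lemma ultrafilter_on_space: "ultrafilter_on X U \<Longrightarrow> X \<in> U"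
  using ultrafilter_on_Int_ne[of X U "{}" "{}"] ultrafilter_on_compl[of X U "{}"] by auto

lemma ultrafilter_on_Int:
  assumes U: "ultrafilter_on X U" and "A \<in> U" "B \<in> U" "A \<subseteq> X"
  shows "A \<inter> B \<in> U"
proof (rule ccontr)
  assume "A \<inter> B \<notin> U"
  then have "X - (A \<inter> B) \<in> U" using U assms(4) ultrafilter_on_compl by blast
  then show False using ultrafilter_on_fip[OF U, of "{A, B, X - (A \<inter> B)}"] assms(2,3) by auto
qed

lemma ultrafilter_on_mono:
  assumes U: "ultrafilter_on X U" and "A \<in> U" "A \<subseteq> B" "B \<subseteq> X"
  shows "B \<in> U"
  using ultrafilter_on_compl[OF U assms(4)] ultrafilter_on_Int_ne[OF U assms(2)] assms(3) by blast

lemma ultrafilter_on_finite_Union: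
  assumes U: "ultrafilter_on X U" and C: "finite C" "\<And>Z. Z \<in> C \<Longrightarrow> Z \<subseteq> X" "\<Union>C \<in> U"
  obtains Z where "Z \<in> C" "Z \<in> U"
proof (rule ccontr)
  assume "\<not> thesis"
  then have "insert (\<Union>C) ((\<lambda>Z. X - Z) ` C) \<subseteq> U"
    using that ultrafilter_on_compl[OF U] C(2,3) by blast
  then have "X \<inter> \<Inter>(insert (\<Union>C) ((\<lambda>Z. X - Z) ` C)) \<noteq> {}"
    by (intro ultrafilter_on_fip[OF U]) (simp_all add: C(1))
  then show False by blast
qed

lemma ultrafilter_on_vimage:
  assumes U: "ultrafilter_on X U" and f: "f \<in> X \<rightarrow> Y"
  shows "ultrafilter_on Y {D. D \<subseteq> Y \<and> X \<inter> f -` D \<in> U}"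
  unfolding ultrafilter_on_def fip_def
proof (intro conjI allI impI)
  fix G assume G: "finite G \<and> G \<subseteq> {D. D \<subseteq> Y \<and> X \<inter> f -` D \<in> U}"
  then have "X \<inter> \<Inter>((\<lambda>D. X \<inter> f -` D) ` G) \<noteq> {}"
    using ultrafilter_on_fip[OF U, of "(\<lambda>D. X \<inter> f -` D) ` G"] by blast
  then show "Y \<inter> \<Inter>G \<noteq> {}" using f by blast
next
  fix E assume "E \<subseteq> Y"
  moreover have "X - X \<inter> f -` E = X \<inter> f -` (Y - E)" using f by blast
  ultimately show "E \<in> {D. D \<subseteq> Y \<and> X \<inter> f -` D \<in> U} \<or> Y - E \<in> {D. D \<subseteq> Y \<and> X \<inter> f -` D \<in> U}"
    using ultrafilter_on_compl[OF U, of "X \<inter> f -` E"] by auto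
qed

lemma shrinking_finite_lower_bound:
  assumes "shrinking S" "S \<noteq> {}" "finite G" "G \<subseteq> S"
  shows "\<exists>C\<in>S. C \<subseteq> \<Inter>G"
  using assms(3,4)
proof (induction G rule: finite_induct)
  case (insert A G)
  then obtain C where "C \<in> S" "C \<subseteq> \<Inter>G" by blast
  moreover obtain C' where "C' \<in> S" "C' \<subseteq> A \<inter> C"
    using assms(1) insert.prems \<open>C \<in> S\<close> unfolding shrinking_def by blast
  ultimately show ?case by blast
qed (use assms(2) in blast)

lemma fip_Un_shrinking:
  assumes "shrinking S" "S \<noteq> {}" "shrinking T" "T \<noteq> {}"
    and meet: "\<And>A B. A \<in> S \<Longrightarrow> B \<in> T \<Longrightarrow> X \<inter> A \<inter> B \<noteq> {}"
  shows "fip X (S \<union> T)"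
  unfolding fip_def
proof (intro allI impI)
  fix G assume G: "finite G \<and> G \<subseteq> S \<union> T"
  obtain A where "A \<in> S" "A \<subseteq> \<Inter>(G \<inter> S)"
    using shrinking_finite_lower_bound[OF assms(1,2), of "G \<inter> S"] G by blast
  moreover obtain B where "B \<in> T" "B \<subseteq> \<Inter>(G \<inter> T)"
    using shrinking_finite_lower_bound[OF assms(3,4), of "G \<inter> T"] G by blast
  ultimately show "X \<inter> \<Inter>G \<noteq> {}" using meet[of A B] G by blast
qed

section \<open>Probability spaces over K\<close>

locale nonarch_prob_space = nonarch_abs av for av :: "'k::field \<Rightarrow> real" +
  fixes X :: "'a set" and R :: "'a set set" and mu :: "'a set \<Rightarrow> 'k"
  assumes prob_measure: "is_prob_measure av X R mu"
begin

abbreviation nrm :: "'a set \<Rightarrow> real" where "nrm A \<equiv> set_norm av R mu A"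

abbreviation N :: "'a \<Rightarrow> real" where "N x \<equiv> Nmu av R mu x"

lemma prob_measureD:
  "covering_ring X R"
  "\<forall>A\<in>R. \<forall>B\<in>R. A \<inter> B = {} \<longrightarrow> mu (A \<union> B) = mu A + mu B"
  "\<forall>A\<in>R. bdd_above {av (mu B) | B. B \<in> R \<and> B \<subseteq> A}"
  "\<forall>S. S \<subseteq> R \<and> shrinking S \<and> \<Inter>S = {} \<longrightarrow>
      (\<forall>e>0. \<exists>B\<in>S. \<forall>A\<in>S. A \<subseteq> B \<longrightarrow> av (mu A) \<le> e)"
  "X \<in> R" "mu X = 1" "nrm X = 1"
  using prob_measure unfolding is_prob_measure_def is_measure_def by simp_all

lemma R_subset: "A \<in> R \<Longrightarrow> A \<subseteq> X"
  using prob_measureD(1) unfolding covering_ring_def by blast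

lemma R_Un: "A \<in> R \<Longrightarrow> B \<in> R \<Longrightarrow> A \<union> B \<in> R"
  and R_Int: "A \<in> R \<Longrightarrow> B \<in> R \<Longrightarrow> A \<inter> B \<in> R"
  and R_Diff: "A \<in> R \<Longrightarrow> B \<in> R \<Longrightarrow> A - B \<in> R"
  using prob_measureD(1) unfolding covering_ring_def ring_closed_def by simp_all

lemma space_in_R: "X \<in> R" and mu_space: "mu X = 1" and nrm_space: "nrm X = 1"
  using prob_measureD(5-7) .

lemma mu_add: "A \<in> R \<Longrightarrow> B \<in> R \<Longrightarrow> A \<inter> B = {} \<Longrightarrow> mu (A \<union> B) = mu A + mu B"
  using prob_measureD(2) by blast

lemma mu_bdd: "A \<in> R \<Longrightarrow> bdd_above {av (mu B) | B. B \<in> R \<and> B \<subseteq> A}"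
  by (rule bspec[OF prob_measureD(3)])

lemma mu_continuous:
  "S \<subseteq> R \<Longrightarrow> shrinking S \<Longrightarrow> \<Inter>S = {} \<Longrightarrow> e > 0 \<Longrightarrow>
    \<exists>B\<in>S. \<forall>A\<in>S. A \<subseteq> B \<longrightarrow> av (mu A) \<le> e"
  using prob_measureD(4) by blast

lemma empty_in_R: "{} \<in> R"
  using R_Diff[OF space_in_R space_in_R] by simp

lemma mu_empty: "mu {} = 0"
  using mu_add[OF empty_in_R empty_in_R] add_left_cancel[of "mu {}" 0 "mu {}"] by simp

lemma mu_split: "A \<in> R \<Longrightarrow> B \<in> R \<Longrightarrow> mu A = mu (A \<inter> B) + mu (A - B)"
  using mu_add[OF R_Int R_Diff, of A B A B] by (simp add: Int_Diff_Un Int_Diff_disjoint)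

lemma av_mu_le_nrm: "A \<in> R \<Longrightarrow> B \<in> R \<Longrightarrow> B \<subseteq> A \<Longrightarrow> av (mu B) \<le> nrm A"
  unfolding set_norm_def using mu_bdd[of A] by (intro cSup_upper) auto

lemma nrm_le: "A \<in> R \<Longrightarrow> (\<And>B. B \<in> R \<Longrightarrow> B \<subseteq> A \<Longrightarrow> av (mu B) \<le> t) \<Longrightarrow> nrm A \<le> t"
  unfolding set_norm_def by (rule cSup_least) blast+

lemma nrm_nonneg: "A \<in> R \<Longrightarrow> 0 \<le> nrm A"
  using av_mu_le_nrm[of A A] av_nonneg[of "mu A"] by simp

lemma av_mu_le_1: "B \<in> R \<Longrightarrow> av (mu B) \<le> 1"
  using av_mu_le_nrm[OF space_in_R _ R_subset] nrm_space by simp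

lemma nrm_empty: "nrm {} = 0"
  using nrm_le[OF empty_in_R, of 0] nrm_nonneg[OF empty_in_R] by (simp add: mu_empty)

lemma nrm_Un: "A \<in> R \<Longrightarrow> B \<in> R \<Longrightarrow> nrm (A \<union> B) \<le> max (nrm A) (nrm B)"
proof (rule nrm_le[OF R_Un])
  fix C assume AB: "A \<in> R" "B \<in> R" and C: "C \<in> R" "C \<subseteq> A \<union> B"
  have "av (mu C) \<le> max (av (mu (C \<inter> A))) (av (mu (C - A)))"
    using mu_split[OF C(1) AB(1)] av_add_le_max by simp
  moreover have "av (mu (C \<inter> A)) \<le> nrm A" using av_mu_le_nrm[OF AB(1) R_Int[OF C(1) AB(1)]] by auto
  moreover have "av (mu (C - A)) \<le> nrm B" using av_mu_le_nrm[OF AB(2) R_Diff[OF C(1) AB(1)]] C(2) by auto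
  ultimately show "av (mu C) \<le> max (nrm A) (nrm B)" by (meson max.mono order_trans)
qed

lemma Nmu_le_nrm: "U \<in> R \<Longrightarrow> x \<in> U \<Longrightarrow> N x \<le> nrm U"
  unfolding Nmu_def using nrm_nonneg by (intro cInf_lower) (auto intro: bdd_belowI[of _ 0])

lemma Nmu_nonneg: "x \<in> X \<Longrightarrow> 0 \<le> N x"
  unfolding Nmu_def using space_in_R nrm_nonneg by (intro cInf_greatest) auto

lemma Nmu_lessE:
  assumes "x \<in> X" "N x < t"
  obtains U where "U \<in> R" "x \<in> U" "nrm U < t"
proof -
  have "{nrm U | U. U \<in> R \<and> x \<in> U} \<noteq> {}" using assms(1) space_in_R by blast
  moreover have "bdd_below {nrm U | U. U \<in> R \<and> x \<in> U}"
    using nrm_nonneg by (auto intro: bdd_belowI[of _ 0])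
  ultimately show ?thesis
    using assms(2) that unfolding Nmu_def by (auto simp: cInf_less_iff)
qed

text \<open>The sets \<open>C - W\<close> with \<open>W \<in> R\<close>, \<open>nrm W < e\<close> form a shrinking family with empty
  intersection, so by continuity one of them has value at most \<open>e\<close>; the ultrametric
  inequality then bounds \<open>mu C\<close>.\<close>

lemma av_mu_le_if_Nmu_le:
  assumes B: "B \<in> R" and C: "C \<in> R" "C \<subseteq> B" and d: "0 \<le> d"
    and Nd: "\<And>x. x \<in> B \<Longrightarrow> N x \<le> d"
  shows "av (mu C) \<le> d"
proof (rule ccontr)
  assume "\<not> av (mu C) \<le> d"
  then obtain e where e: "d < e" "e < av (mu C)"
    using dense not_le by blast
  define S where "S = {C - W | W. W \<in> R \<and> nrm W < e}"
  have "S \<subseteq> R" unfolding S_def using R_Diff[OF C(1)] by blast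
  moreover have "shrinking S" unfolding shrinking_def
  proof (intro ballI)
    fix A1 A2 assume "A1 \<in> S" "A2 \<in> S"
    then obtain W1 W2 where W: "A1 = C - W1" "W1 \<in> R" "nrm W1 < e" "A2 = C - W2" "W2 \<in> R" "nrm W2 < e"
      unfolding S_def by blast
    have "nrm (W1 \<union> W2) < e" using nrm_Un[OF W(2) W(5)] W(3,6) by linarith
    then have "C - (W1 \<union> W2) \<in> S"
      unfolding S_def using R_Un[OF W(2) W(5)] by (intro CollectI exI[of _ "W1 \<union> W2"]) simp
    moreover have "C - (W1 \<union> W2) \<subseteq> A1 \<inter> A2" using W(1,4) by blast
    ultimately show "\<exists>C'\<in>S. C' \<subseteq> A1 \<inter> A2" ..
  qed
  moreover have "\<Inter>S = {}"
  proof (rule equals0I)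
    fix x assume x: "x \<in> \<Inter>S"
    have "C \<in> S" using empty_in_R nrm_empty e d unfolding S_def by force
    then have "x \<in> C" using x by blast
    then obtain U where U: "U \<in> R" "x \<in> U" "nrm U < e"
      using Nmu_lessE[of x e] Nd[of x] R_subset[OF C(1)] C(2) e(1) by force
    then have "C - U \<in> S" unfolding S_def by blast
    then show False using x U(2) by blast
  qed
  ultimately obtain D where D: "D \<in> S" "\<And>A. A \<in> S \<Longrightarrow> A \<subseteq> D \<Longrightarrow> av (mu A) \<le> e"
    using mu_continuous e d by (meson le_less_trans)
  then obtain W where W: "D = C - W" "W \<in> R" "nrm W < e" unfolding S_def by blast
  have "av (mu (C - W)) \<le> e" using D W(1) by blast
  moreover have "av (mu (C \<inter> W)) \<le> e" using av_mu_le_nrm[OF W(2) R_Int[OF C(1) W(2)]] W(3) by auto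
  ultimately have "av (mu C) \<le> e"
    using mu_split[OF C(1) W(2)] av_add_le_max[of "mu (C \<inter> W)" "mu (C - W)"] by simp
  then show False using e(2) by simp
qed

lemma av_mu_diff_le_if_Nmu_le:
  assumes B: "B \<in> R" "B' \<in> R" and d: "0 \<le> d"
    and Nd: "\<And>x. x \<in> X \<Longrightarrow> (x \<in> B) \<noteq> (x \<in> B') \<Longrightarrow> N x \<le> d"
  shows "av (mu B - mu B') \<le> d"
proof -
  have "av (mu (B - B')) \<le> d"
    using Nd R_subset[OF B(1)] by (intro av_mu_le_if_Nmu_le[OF R_Diff[OF B] R_Diff[OF B] _ d]) auto
  moreover have "av (mu (B' - B)) \<le> d"
    using Nd R_subset[OF B(2)] by (intro av_mu_le_if_Nmu_le[OF R_Diff[OF B(2,1)] R_Diff[OF B(2,1)] _ d]) auto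
  moreover have "mu B - mu B' = mu (B - B') - mu (B' - B)"
    using mu_split[OF B] mu_split[OF B(2,1)] by (simp add: Int_commute)
  ultimately show ?thesis using av_diff_le_max[of "mu (B - B')" "mu (B' - B)"] by simp
qed

lemma ultrafilter_on_Inter_R_ne:
  assumes U: "ultrafilter_on X U" and e: "e > 0"
    and large: "\<And>D. D \<in> R \<Longrightarrow> D \<in> U \<Longrightarrow> e < nrm D"
  shows "\<Inter>(U \<inter> R) \<noteq> {}"
proof
  assume empty: "\<Inter>(U \<inter> R) = {}"
  have "shrinking (U \<inter> R)"
    unfolding shrinking_def
  proof (intro ballI)
    fix A B assume A: "A \<in> U \<inter> R" and B: "B \<in> U \<inter> R"
    then have "A \<inter> B \<in> U \<inter> R"
      using ultrafilter_on_Int[OF U, of A B] R_subset[of A] R_Int[of A B] by simp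
    then show "\<exists>C\<in>U \<inter> R. C \<subseteq> A \<inter> B" by blast
  qed
  then obtain D where D: "D \<in> R" "D \<in> U"
    and small: "\<And>A. A \<in> U \<Longrightarrow> A \<in> R \<Longrightarrow> A \<subseteq> D \<Longrightarrow> av (mu A) \<le> e"
    using mu_continuous[of "U \<inter> R", OF _ _ empty e] by blast
  have "\<not> nrm D \<le> e" using large[OF D] by simp
  then obtain C where C: "C \<in> R" "C \<subseteq> D" "\<not> av (mu C) \<le> e"
    using nrm_le[OF D(1), of e] by blast
  have "C \<notin> U" using small C by blast
  then have "D \<inter> (X - C) \<in> U"
    using ultrafilter_on_compl[OF U R_subset[OF C(1)]] ultrafilter_on_Int[OF U D(2) _ R_subset[OF D(1)]]
    by blast
  moreover have "D \<inter> (X - C) = D - C" using R_subset[OF D(1)] by blast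
  ultimately have "av (mu (D - C)) \<le> e" using small R_Diff[OF D(1) C(1)] by simp
  moreover have "mu C = mu D - mu (D - C)" using mu_split[OF D(1) C(1)] C(2) by (simp add: Int_absorb1)
  ultimately have "av (mu C) \<le> e" using small[OF D(2,1)] av_diff_le_max[of "mu D" "mu (D - C)"] by simp
  then show False using C(3) by simp
qed

lemma ultrafilter_on_common_point:
  assumes U: "ultrafilter_on X U" and e: "e > 0"
    and large: "\<And>D. D \<in> R \<Longrightarrow> D \<in> U \<Longrightarrow> e < nrm D"
  obtains z where "z \<in> X" "\<And>D. D \<in> R \<Longrightarrow> D \<in> U \<Longrightarrow> z \<in> D" "e \<le> N z"
proof -
  obtain z where z: "z \<in> \<Inter>(U \<inter> R)" using ultrafilter_on_Inter_R_ne[OF assms] by blast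
  then have "z \<in> X" using ultrafilter_on_space[OF U] space_in_R by blast
  moreover have "e \<le> N z"
  proof (rule ccontr)
    assume "\<not> e \<le> N z"
    then obtain V where V: "V \<in> R" "z \<in> V" "nrm V < e"
      using Nmu_lessE[OF \<open>z \<in> X\<close>, of e] by auto
    then have "V \<notin> U" using large[OF V(1)] by auto
    then have "X - V \<in> U" by (rule ultrafilter_on_compl[OF U R_subset[OF V(1)]])
    then show False using z V(2) R_Diff[OF space_in_R V(1)] by blast
  qed
  ultimately show ?thesis using that z by blast
qed

definition approx_within :: "'a set \<Rightarrow> real \<Rightarrow> 'a set \<Rightarrow> bool" where
  "approx_within A d B \<longleftrightarrow> B \<in> R \<and> (\<forall>x\<in>X. (x \<in> A) \<noteq> (x \<in> B) \<longrightarrow> N x \<le> d)"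

lemma approx_withinD: "approx_within A d B \<Longrightarrow> B \<in> R"
  unfolding approx_within_def by blast

lemma approx_within_Un:
  "approx_within A1 d B1 \<Longrightarrow> approx_within A2 d B2 \<Longrightarrow> approx_within (A1 \<union> A2) d (B1 \<union> B2)"
  unfolding approx_within_def using R_Un by blast

lemma approx_within_Int:
  "approx_within A1 d B1 \<Longrightarrow> approx_within A2 d B2 \<Longrightarrow> approx_within (A1 \<inter> A2) d (B1 \<inter> B2)"
  unfolding approx_within_def using R_Int by blast

lemma approx_within_Diff:
  "approx_within A1 d B1 \<Longrightarrow> approx_within A2 d B2 \<Longrightarrow> approx_within (A1 - A2) d (B1 - B2)"
  unfolding approx_within_def using R_Diff by blast

lemma step_function_level_set:
  fixes s :: "'a \<Rightarrow> 'k"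
  assumes "step_function R s" shows "{x\<in>X. P (s x)} \<in> R"
proof -
  obtain n and c :: "nat \<Rightarrow> 'k" and A where A: "\<forall>i<n. A i \<in> R" and s: "s = (\<lambda>x. \<Sum>i<n. c i * of_bool (x \<in> A i))"
    using assms unfolding step_function_def by blast
  have "{x\<in>X. P (\<Sum>i<m. c i * of_bool (x \<in> A i))} \<in> R" if "m \<le> n" for m P
    using that
  proof (induction m arbitrary: P)
    case 0
    then show ?case by (cases "P 0") (simp_all add: space_in_R empty_in_R)
  next
    case (Suc m)
    let ?s = "\<lambda>x. \<Sum>i<m. c i * of_bool (x \<in> A i)"
    have Am: "A m \<in> R" using A Suc.prems by simp
    have "{x\<in>X. P (\<Sum>i<Suc m. c i * of_bool (x \<in> A i))} =
        (A m \<inter> {x\<in>X. P (?s x + c m)}) \<union> ({x\<in>X. P (?s x)} - A m)"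
      using R_subset[OF Am] by auto
    moreover have "{x\<in>X. P (?s x + c m)} \<in> R" "{x\<in>X. P (?s x)} \<in> R"
      using Suc.IH[of "\<lambda>v. P (v + c m)"] Suc.IH[of P] Suc.prems by simp_all
    ultimately show ?case using Am by (simp add: R_Un R_Int R_Diff)
  qed
  then show ?thesis unfolding s by simp
qed

lemma approx_within_if_in_completion:
  assumes "A \<in> completion av X R mu" "d > 0"
  obtains B where "approx_within A d B"
proof -
  obtain fs :: "nat \<Rightarrow> 'a \<Rightarrow> 'k" where step: "\<And>n. step_function R (fs n)"
    and conv: "\<And>e. e > 0 \<Longrightarrow> \<exists>M. \<forall>n\<ge>M. \<forall>x\<in>X. av (of_bool (x \<in> A) - fs n x) * N x \<le> e"
    using assms(1) unfolding completion_def mu_integrable_def by blast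
  obtain M where M: "\<And>x. x \<in> X \<Longrightarrow> av (of_bool (x \<in> A) - fs M x) * N x \<le> d"
    using conv[OF assms(2)] by blast
  \<comment> \<open>Round \<open>fs M\<close> to \<open>0\<close> or \<open>1\<close>; where the rounding disagrees with \<open>A\<close>, the indicator of \<open>A\<close>
    is at distance at least \<open>1\<close> from \<open>fs M\<close>.\<close>
  define B where "B = {x\<in>X. av (fs M x - 1) < 1}"
  have "N x \<le> d" if x: "x \<in> X" "(x \<in> A) \<noteq> (x \<in> B)" for x
  proof -
    have "1 \<le> av (of_bool (x \<in> A) - fs M x)"
      using x av_diff_le_max[of "fs M x" "fs M x - 1"] av_minus_commute[of 1 "fs M x"]
      unfolding B_def by (cases "x \<in> A") auto
    then have "1 * N x \<le> av (of_bool (x \<in> A) - fs M x) * N x"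
      using Nmu_nonneg[OF x(1)] by (rule mult_right_mono)
    then show ?thesis using M[OF x(1)] by simp
  qed
  moreover have "B \<in> R" unfolding B_def by (rule step_function_level_set[OF step])
  ultimately show ?thesis using that unfolding approx_within_def by blast
qed

lemma in_completion_if_approx_within:
  assumes "A \<subseteq> X" and approx: "\<And>d. d > 0 \<Longrightarrow> \<exists>B. approx_within A d B"
  shows "A \<in> completion av X R mu"
proof -
  define Bs where "Bs n = (SOME B. approx_within A (1 / Suc n) B)" for n
  have Bs: "approx_within A (1 / Suc n) (Bs n)" for n
    unfolding Bs_def by (rule someI_ex) (simp add: approx)
  define fs where "fs n = (\<lambda>x. of_bool (x \<in> Bs n) :: 'k)" for n
  have "step_function R (fs n)" for n
    unfolding step_function_def fs_def using approx_withinD[OF Bs[of n]]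
    by (intro exI[of _ 1] exI[of _ "\<lambda>_. 1"] exI[of _ "\<lambda>_. Bs n"]) auto
  moreover have "\<exists>M. \<forall>n\<ge>M. \<forall>x\<in>X. av (of_bool (x \<in> A) - fs n x) * N x \<le> e" if e: "e > 0" for e
  proof -
    obtain M where M: "inverse (Suc M) < e" using reals_Archimedean[OF e] by blast
    have "av (of_bool (x \<in> A) - fs n x) * N x \<le> e" if n: "n \<ge> M" and x: "x \<in> X" for n x
    proof (cases "(x \<in> A) = (x \<in> Bs n)")
      case True
      then show ?thesis using e by (simp add: fs_def)
    next
      case False
      then have "N x \<le> 1 / Suc n" using Bs[of n] x unfolding approx_within_def by blast
      also have "\<dots> \<le> inverse (Suc M)" using n by (simp add: inverse_eq_divide frac_le)
      finally show ?thesis using M False by (cases "x \<in> A") (auto simp: fs_def)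
    qed
    then show ?thesis by blast
  qed
  ultimately show ?thesis using assms(1) unfolding completion_def mu_integrable_def by blast
qed

lemma completion_iff_approx_within:
  "A \<in> completion av X R mu \<longleftrightarrow> A \<subseteq> X \<and> (\<forall>d>0. \<exists>B. approx_within A d B)"
proof (intro iffI conjI allI impI)
  show "A \<subseteq> X" if "A \<in> completion av X R mu" using that unfolding completion_def by blast
  show "\<exists>B. approx_within A d B" if "A \<in> completion av X R mu" "d > 0" for d
    using approx_within_if_in_completion[OF that] by metis
qed (use in_completion_if_approx_within in blast)

abbreviation R' :: "'a set set" where "R' \<equiv> completion av X R mu"

lemma completion_subset: "A \<in> R' \<Longrightarrow> A \<subseteq> X"
  unfolding completion_def by blast

lemma R_subset_completion: "A \<in> R \<Longrightarrow> A \<in> R'"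
  unfolding completion_iff_approx_within approx_within_def using R_subset by blast

lemma completion_Un: "A1 \<in> R' \<Longrightarrow> A2 \<in> R' \<Longrightarrow> A1 \<union> A2 \<in> R'"
  and completion_Int: "A1 \<in> R' \<Longrightarrow> A2 \<in> R' \<Longrightarrow> A1 \<inter> A2 \<in> R'"
  and completion_Diff: "A1 \<in> R' \<Longrightarrow> A2 \<in> R' \<Longrightarrow> A1 - A2 \<in> R'"
  unfolding completion_iff_approx_within
  by (meson approx_within_Un approx_within_Int approx_within_Diff le_supI Int_lower1 Diff_subset
      order_trans)+

lemma approx_within_mu_close:
  assumes "approx_within A d1 B1" "approx_within A d2 B2" "0 \<le> d1" "0 \<le> d2"
  shows "av (mu B1 - mu B2) \<le> max d1 d2"
  using assms unfolding approx_within_def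
  by (intro av_mu_diff_le_if_Nmu_le) (auto simp: le_max_iff_disj)

definition limit_value :: "'a set \<Rightarrow> 'k \<Rightarrow> bool" where
  "limit_value A v \<longleftrightarrow> (\<forall>d>0. \<forall>B. approx_within A d B \<longrightarrow> av (mu B - v) \<le> d)"

definition mu_ext :: "'a set \<Rightarrow> 'k" where
  "mu_ext A = (SOME v. limit_value A v)"

lemma limit_value_exists:
  assumes A: "A \<in> R'" shows "\<exists>v. limit_value A v"
proof -
  define Bs where "Bs n = (SOME B. approx_within A (1 / Suc n) B)" for n
  have Bs: "approx_within A (1 / Suc n) (Bs n)" for n
    unfolding Bs_def by (rule someI_ex) (use A completion_iff_approx_within in simp)
  have "\<exists>M. \<forall>m\<ge>M. \<forall>n\<ge>M. av (mu (Bs m) - mu (Bs n)) < e" if e: "e > 0" for e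
  proof -
    obtain M where M: "inverse (Suc M) < e" using reals_Archimedean[OF e] by blast
    have "av (mu (Bs m) - mu (Bs n)) < e" if "m \<ge> M" "n \<ge> M" for m n
      using approx_within_mu_close[OF Bs Bs, of m n] inverse_Suc_le[OF that(1)]
        inverse_Suc_le[OF that(2)] M by simp
    then show ?thesis by blast
  qed
  then obtain l where l: "\<And>e. e > 0 \<Longrightarrow> \<exists>M. \<forall>n\<ge>M. av (mu (Bs n) - l) < e"
    using av_complete[of "\<lambda>n. mu (Bs n)"] by blast
  have "av (mu B - l) \<le> d" if d: "d > 0" and B: "approx_within A d B" for d B
  proof (rule field_le_epsilon)
    fix e :: real assume e: "e > 0"
    obtain M1 where M1: "\<forall>n\<ge>M1. av (mu (Bs n) - l) < e" using l[OF e] by blast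
    obtain M2 where M2: "inverse (Suc M2) < e" using reals_Archimedean[OF e] by blast
    define n where "n = max M1 M2"
    have "av (mu B - mu (Bs n)) \<le> max d (1 / Suc n)"
      using approx_within_mu_close[OF B Bs] d by simp
    moreover have "1 / Suc n < e" using inverse_Suc_le[of M2 n] M2 unfolding n_def by simp
    moreover have "av (mu (Bs n) - l) < e" using M1 unfolding n_def by simp
    ultimately show "av (mu B - l) \<le> d + e"
      using av_diff_triangle[of "mu B" l "mu (Bs n)"] d e by linarith
  qed
  then show ?thesis unfolding limit_value_def by blast
qed

lemma limit_value_unique:
  assumes A: "A \<in> R'" and v: "limit_value A v" and w: "limit_value A w"
  shows "v = w"
proof -
  have "av (v - w) \<le> d" if d: "d > 0" for d
  proof -
    obtain B where B: "approx_within A d B" using A d completion_iff_approx_within by blast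
    then have "av (mu B - v) \<le> d" "av (mu B - w) \<le> d" using v w d unfolding limit_value_def by blast+
    then show ?thesis
      using av_diff_triangle[of v w "mu B"] av_minus_commute[of v "mu B"] by simp
  qed
  then show ?thesis using eq_0_if_av_le_all_pos[of "v - w"] by simp
qed

lemma limit_value_mu_ext: "A \<in> R' \<Longrightarrow> limit_value A (mu_ext A)"
  unfolding mu_ext_def by (rule someI_ex) (rule limit_value_exists)

lemma mu_ext_close: "A \<in> R' \<Longrightarrow> approx_within A d B \<Longrightarrow> d > 0 \<Longrightarrow> av (mu B - mu_ext A) \<le> d"
  using limit_value_mu_ext unfolding limit_value_def by blast

lemma mu_ext_eq_mu:
  assumes A: "A \<in> R" shows "mu_ext A = mu A"
proof -
  have "approx_within A 0 A" using A unfolding approx_within_def by blast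
  then have "limit_value A (mu A)"
    unfolding limit_value_def using approx_within_mu_close[of A _ _ 0 A] by fastforce
  then show ?thesis
    using limit_value_unique[OF R_subset_completion[OF A] limit_value_mu_ext] R_subset_completion[OF A]
    by blast
qed

lemma mu_ext_add:
  assumes A1: "A1 \<in> R'" and A2: "A2 \<in> R'" and disj: "A1 \<inter> A2 = {}"
  shows "mu_ext (A1 \<union> A2) = mu_ext A1 + mu_ext A2"
proof -
  have "av (mu_ext (A1 \<union> A2) - (mu_ext A1 + mu_ext A2)) \<le> d" if d: "d > 0" for d
  proof -
    obtain B1 B2 where B1: "approx_within A1 d B1" and B2: "approx_within A2 d B2"
      using A1 A2 d completion_iff_approx_within by meson
    have B2': "approx_within A2 d (B2 - B1)"
      using approx_within_Diff[OF B2 B1] disj by (simp add: Diff_triv Int_commute)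
    have B12: "approx_within (A1 \<union> A2) d (B1 \<union> (B2 - B1))"
      using approx_within_Un[OF B1 B2'] .
    have "av (mu B1 - mu_ext A1) \<le> d" "av (mu (B2 - B1) - mu_ext A2) \<le> d"
      "av (mu (B1 \<union> (B2 - B1)) - mu_ext (A1 \<union> A2)) \<le> d"
      using mu_ext_close[OF A1 B1 d] mu_ext_close[OF A2 B2' d]
        mu_ext_close[OF completion_Un[OF A1 A2] B12 d] by simp_all
    moreover have "mu (B1 \<union> (B2 - B1)) = mu B1 + mu (B2 - B1)"
      using approx_withinD[OF B1] approx_withinD[OF B2'] by (intro mu_add) auto
    moreover have "av ((mu B1 - mu_ext A1) + (mu (B2 - B1) - mu_ext A2)
        - (mu (B1 \<union> (B2 - B1)) - mu_ext (A1 \<union> A2))) \<le>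
      max (max (av (mu B1 - mu_ext A1)) (av (mu (B2 - B1) - mu_ext A2)))
        (av (mu (B1 \<union> (B2 - B1)) - mu_ext (A1 \<union> A2)))"
      using av_diff_le_max av_add_le_max by (meson max.mono order_refl order_trans)
    ultimately show ?thesis by (simp add: algebra_simps)
  qed
  then have "mu_ext (A1 \<union> A2) - (mu_ext A1 + mu_ext A2) = 0" by (rule eq_0_if_av_le_all_pos)
  then show ?thesis by simp
qed

lemma av_mu_ext_le_1:
  assumes A: "A \<in> R'" shows "av (mu_ext A) \<le> 1"
proof -
  obtain B where B: "approx_within A 1 B"
    using A unfolding completion_iff_approx_within by (meson zero_less_one)
  have "mu_ext A = (mu_ext A - mu B) + mu B" by simp
  moreover have "av (mu_ext A - mu B) \<le> 1"
    using mu_ext_close[OF A B] av_minus_commute by simp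
  moreover have "av (mu B) \<le> 1" using av_mu_le_1[OF approx_withinD[OF B]] .
  ultimately show ?thesis using av_add_le_max[of "mu_ext A - mu B" "mu B"] by simp
qed

lemma av_mu_ext_le_if_Nmu_le:
  assumes A: "A \<in> R'" and e: "0 \<le> e" and Ne: "\<And>x. x \<in> A \<Longrightarrow> N x \<le> e"
  shows "av (mu_ext A) \<le> e"
proof (rule field_le_epsilon)
  fix d :: real assume d: "d > 0"
  obtain B where B: "approx_within A d B" using A d completion_iff_approx_within by blast
  have "mu_ext A = (mu_ext A - mu B) + mu B" by simp
  moreover have "av (mu_ext A - mu B) \<le> d"
    using mu_ext_close[OF A B d] av_minus_commute by simp
  moreover have "av (mu B) \<le> max e d"
  proof (rule av_mu_le_if_Nmu_le[OF approx_withinD[OF B] approx_withinD[OF B] order_refl])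
    show "0 \<le> max e d" using e by simp
    fix x assume "x \<in> B"
    then show "N x \<le> max e d"
      using Ne[of x] B R_subset[OF approx_withinD[OF B]] unfolding approx_within_def
      by (cases "x \<in> A") force+
  qed
  ultimately show "av (mu_ext A) \<le> e + d"
    using av_add_le_max[of "mu_ext A - mu B" "mu B"] e d by simp
qed

text \<open>If continuity failed, the points where \<open>N\<close> exceeds \<open>e\<close> would meet every member of \<open>S\<close>;
  an ultrafilter containing \<open>S\<close> and these points has a common point of its members in \<open>R\<close>,
  and that point lies in every member of \<open>S\<close>.\<close>

lemma mu_ext_continuous:
  assumes S: "S \<subseteq> R'" "shrinking S" "\<Inter>S = {}" and e: "e > 0"
  shows "\<exists>B\<in>S. \<forall>A\<in>S. A \<subseteq> B \<longrightarrow> av (mu_ext A) \<le> e"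
proof (rule ccontr)
  assume contra: "\<not> ?thesis"
  define Y where "Y = {y\<in>X. e < N y}"
  have "X \<inter> B \<inter> Y \<noteq> {}" if B: "B \<in> S" for B
  proof -
    obtain A where A: "A \<in> S" "A \<subseteq> B" "\<not> av (mu_ext A) \<le> e" using contra B by auto
    then obtain y where "y \<in> A" "e < N y"
      using av_mu_ext_le_if_Nmu_le[of A e] S(1) e by force
    then show ?thesis using A(1,2) S(1) completion_subset unfolding Y_def by blast
  qed
  moreover have "S \<noteq> {}" using S(3) by auto
  ultimately have "fip X (S \<union> {Y})"
    by (intro fip_Un_shrinking[OF S(2)]) (auto simp: shrinking_def)
  then obtain U where U: "ultrafilter_on X U" "S \<union> {Y} \<subseteq> U" by (rule ultrafilter_on_extends)
  have "e < nrm D" if D: "D \<in> R" "D \<in> U" for D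
  proof -
    obtain y where "y \<in> D" "y \<in> Y" using ultrafilter_on_Int_ne[OF U(1) D(2), of Y] U(2) by blast
    then show ?thesis using Nmu_le_nrm[OF D(1)] unfolding Y_def by force
  qed
  then obtain z where z: "z \<in> X" "\<And>D. D \<in> R \<Longrightarrow> D \<in> U \<Longrightarrow> z \<in> D" "e \<le> N z"
    using ultrafilter_on_common_point[OF U(1) e] by blast
  have "z \<in> A" if A: "A \<in> S" for A
  proof -
    have "A \<in> R'" using A S(1) by blast
    then obtain B where B: "approx_within A (e / 2) B"
      unfolding completion_iff_approx_within using e by (meson half_gt_zero)
    have "B \<in> U"
    proof (rule ccontr)
      assume "B \<notin> U"
      then have "X - B \<in> U" using ultrafilter_on_compl[OF U(1) R_subset[OF approx_withinD[OF B]]] by blast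
      then have "X \<inter> \<Inter>{A, Y, X - B} \<noteq> {}"
        using ultrafilter_on_fip[OF U(1), of "{A, Y, X - B}"] U(2) A by blast
      then show False using B e unfolding approx_within_def Y_def by force
    qed
    then have "z \<in> B" using z(2) approx_withinD[OF B] by blast
    then show "z \<in> A" using B z(1,3) e unfolding approx_within_def by force
  qed
  then show False using S(3) by blast
qed

theorem prob_measure_completion: "is_prob_measure av X R' mu_ext"
proof -
  have "X \<in> R'" by (rule R_subset_completion[OF space_in_R])
  then have "covering_ring X R'"
    unfolding covering_ring_def ring_closed_def
  proof (intro conjI ballI)
    show "R' \<subseteq> Pow X" using completion_subset by blast
    show "\<Union>R' = X" using completion_subset \<open>X \<in> R'\<close> by blast
  qed (simp_all add: completion_Un completion_Int completion_Diff)
  moreover have "\<forall>A\<in>R'. bdd_above {av (mu_ext B) | B. B \<in> R' \<and> B \<subseteq> A}"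
    using av_mu_ext_le_1 by (auto intro: bdd_aboveI[of _ 1])
  moreover have "mu_ext X = 1" using mu_ext_eq_mu[OF space_in_R] mu_space by simp
  moreover have "set_norm av R' mu_ext X = 1"
    unfolding set_norm_def
    using \<open>X \<in> R'\<close> \<open>mu_ext X = 1\<close> av_mu_ext_le_1 by (intro cSup_eq_maximum) force+
  moreover have "\<forall>A\<in>R'. \<forall>B\<in>R'. A \<inter> B = {} \<longrightarrow> mu_ext (A \<union> B) = mu_ext A + mu_ext B"
    using mu_ext_add by blast
  moreover have "\<forall>S. S \<subseteq> R' \<and> shrinking S \<and> \<Inter>S = {} \<longrightarrow>
      (\<forall>e>0. \<exists>B\<in>S. \<forall>A\<in>S. A \<subseteq> B \<longrightarrow> av (mu_ext A) \<le> e)"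
    using mu_ext_continuous by blast
  ultimately show ?thesis
    unfolding is_prob_measure_def is_measure_def using \<open>X \<in> R'\<close> by blast
qed

end

section \<open>Cylinder sets\<close>

locale cylinder_space =
  fixes L :: "'i set" and Xs :: "'i \<Rightarrow> 'a set" and Rs :: "'i \<Rightarrow> 'a set set"
  assumes Rs_covering_ring: "\<And>j. j \<in> L \<Longrightarrow> covering_ring (Xs j) (Rs j)"
    and space_in_Rs: "\<And>j. j \<in> L \<Longrightarrow> Xs j \<in> Rs j"
begin

abbreviation PX :: "('i \<Rightarrow> 'a) set" where "PX \<equiv> PiE L Xs"

abbreviation CR :: "('i \<Rightarrow> 'a) set set" where "CR \<equiv> cylinder_ring L Xs Rs"

abbreviation proj_vimage :: "'i \<Rightarrow> 'a set \<Rightarrow> ('i \<Rightarrow> 'a) set" where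
  "proj_vimage k D \<equiv> PX \<inter> (\<lambda>x. x k) -` D"

abbreviation admissible :: "'i set \<Rightarrow> ('i \<Rightarrow> 'a set) \<Rightarrow> bool" where
  "admissible J A \<equiv> finite J \<and> J \<subseteq> L \<and> (\<forall>j\<in>J. A j \<in> Rs j)"

definition cyl :: "'i set \<Rightarrow> ('i \<Rightarrow> 'a set) \<Rightarrow> ('i \<Rightarrow> 'a) set" where
  "cyl J A = PX \<inter> (\<Inter>j\<in>J. {x. x j \<in> A j})"

lemma Rs_subset: "j \<in> L \<Longrightarrow> D \<in> Rs j \<Longrightarrow> D \<subseteq> Xs j"
  using Rs_covering_ring unfolding covering_ring_def by blast

lemma Rs_Int: "j \<in> L \<Longrightarrow> A \<in> Rs j \<Longrightarrow> B \<in> Rs j \<Longrightarrow> A \<inter> B \<in> Rs j"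
  and Rs_Diff: "j \<in> L \<Longrightarrow> A \<in> Rs j \<Longrightarrow> B \<in> Rs j \<Longrightarrow> A - B \<in> Rs j"
  using Rs_covering_ring unfolding covering_ring_def ring_closed_def by simp_all

lemma cylinders_eq: "cylinders L Xs Rs = {cyl J A | J A. admissible J A}"
  unfolding cylinders_def cyl_def by blast

lemma cyl_subset: "cyl J A \<subseteq> PX"
  unfolding cyl_def by blast

lemma cyl_empty: "cyl {} A = PX"
  unfolding cyl_def by simp

lemma cyl_singleton: "cyl {k} (\<lambda>_. D) = proj_vimage k D"
  unfolding cyl_def by auto

lemma cyl_insert: "cyl (insert k J) A = proj_vimage k (A k) \<inter> cyl J A"
  unfolding cyl_def by auto

lemma cyl_Int:
  assumes "J1 \<union> J2 \<subseteq> L"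
  shows "cyl J1 A1 \<inter> cyl J2 A2 =
    cyl (J1 \<union> J2) (\<lambda>j. (if j \<in> J1 then A1 j else Xs j) \<inter> (if j \<in> J2 then A2 j else Xs j))"
proof (rule set_eqI)
  fix x
  show "x \<in> cyl J1 A1 \<inter> cyl J2 A2 \<longleftrightarrow>
    x \<in> cyl (J1 \<union> J2) (\<lambda>j. (if j \<in> J1 then A1 j else Xs j) \<inter> (if j \<in> J2 then A2 j else Xs j))"
  proof (cases "x \<in> PX")
    case True
    then have "\<And>j. j \<in> L \<Longrightarrow> x j \<in> Xs j" by (auto simp: PiE_iff)
    then show ?thesis unfolding cyl_def using True assms by auto
  qed (simp add: cyl_def)
qed

lemma admissible_Int:
  assumes "admissible J1 A1" "admissible J2 A2"
  shows "admissible (J1 \<union> J2) (\<lambda>j. (if j \<in> J1 then A1 j else Xs j) \<inter> (if j \<in> J2 then A2 j else Xs j))"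
  using assms space_in_Rs Rs_Int by (auto 4 3)

definition cyl_semiring :: "('i \<Rightarrow> 'a) set set" where
  "cyl_semiring = insert {} (cylinders L Xs Rs)"

lemma cyl_semiringE:
  assumes "Z \<in> cyl_semiring"
  obtains "Z = {}" | J A where "admissible J A" "Z = cyl J A"
  using assms unfolding cyl_semiring_def cylinders_eq by blast

lemma cyl_in_semiring: "admissible J A \<Longrightarrow> cyl J A \<in> cyl_semiring"
  unfolding cyl_semiring_def cylinders_eq by blast

lemma cyl_semiring_subset: "Z \<in> cyl_semiring \<Longrightarrow> Z \<subseteq> PX"
  by (erule cyl_semiringE) (auto simp: cyl_subset)

lemma proj_vimage_in_semiring: "k \<in> L \<Longrightarrow> D \<in> Rs k \<Longrightarrow> proj_vimage k D \<in> cyl_semiring"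
  using cyl_in_semiring[of "{k}" "\<lambda>_. D"] by (simp add: cyl_singleton)

lemma cyl_semiring_Int:
  assumes "Z1 \<in> cyl_semiring" "Z2 \<in> cyl_semiring"
  shows "Z1 \<inter> Z2 \<in> cyl_semiring"
proof -
  have "{} \<in> cyl_semiring" unfolding cyl_semiring_def by blast
  from assms(1) show ?thesis
  proof (cases rule: cyl_semiringE)
    case (2 J1 A1)
    from assms(2) show ?thesis
    proof (cases rule: cyl_semiringE)
      case (2 J2 A2)
      then show ?thesis
        using \<open>admissible J1 A1\<close> \<open>Z1 = cyl J1 A1\<close> cyl_Int[of J1 J2 A1 A2]
          cyl_in_semiring[OF admissible_Int] by simp
    qed (use \<open>{} \<in> cyl_semiring\<close> in simp)
  qed (use \<open>{} \<in> cyl_semiring\<close> in simp)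
qed

text \<open>Removing the factors of \<open>cyl J A\<close> one coordinate at a time: \<open>Z - cyl (insert k J) A\<close> is the
  disjoint union of \<open>Z \<inter> proj_vimage k (Xs k - A k)\<close> and \<open>(Z \<inter> proj_vimage k (A k)) - cyl J A\<close>.\<close>

lemma cyl_semiring_Diff_cyl:
  assumes "finite J" "J \<subseteq> L" "\<forall>j\<in>J. A j \<in> Rs j" "Z \<in> cyl_semiring"
  shows "\<exists>C\<subseteq>cyl_semiring. finite C \<and> disjoint C \<and> Z - cyl J A = \<Union>C"
  using assms
proof (induction J arbitrary: Z rule: finite_induct)
  case empty
  then show ?case using cyl_semiring_subset[of Z] by (intro exI[of _ "{}"]) (auto simp: cyl_empty)
next
  case (insert k J)
  have k: "k \<in> L" "A k \<in> Rs k" using insert.prems by auto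
  define Z1 where "Z1 = Z \<inter> proj_vimage k (Xs k - A k)"
  define Z2 where "Z2 = Z \<inter> proj_vimage k (A k)"
  have Z1: "Z1 \<in> cyl_semiring"
    unfolding Z1_def using insert.prems(3) k space_in_Rs Rs_Diff
    by (intro cyl_semiring_Int proj_vimage_in_semiring) auto
  have "Z2 \<in> cyl_semiring"
    unfolding Z2_def using insert.prems(3) k by (intro cyl_semiring_Int proj_vimage_in_semiring)
  then have "\<exists>C\<subseteq>cyl_semiring. finite C \<and> disjoint C \<and> Z2 - cyl J A = \<Union>C"
    using insert.IH insert.prems(1,2) by simp
  then obtain C where C: "C \<subseteq> cyl_semiring" "finite C" "disjoint C" "Z2 - cyl J A = \<Union>C"
    by (elim exE conjE) (rule that)
  have "x k \<in> Xs k" if "x \<in> Z" for x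
    using cyl_semiring_subset[OF insert.prems(3)] k(1) that by (auto simp: PiE_iff)
  then have "Z - cyl (insert k J) A = Z1 \<union> (Z2 - cyl J A)"
    unfolding cyl_insert Z1_def Z2_def using cyl_semiring_subset[OF insert.prems(3)] by blast
  then have "Z - cyl (insert k J) A = \<Union>(insert Z1 C)" using C(4) by simp
  moreover have "disjoint (insert Z1 C)"
    using C(3,4) unfolding Z1_def Z2_def by (auto simp: pairwise_insert disjnt_def)
  ultimately show ?case using Z1 C(1,2) by (intro exI[of _ "insert Z1 C"]) auto
qed

lemma semiring_of_sets_cyl: "semiring_of_sets PX cyl_semiring"
proof
  show "cyl_semiring \<subseteq> Pow PX" using cyl_semiring_subset by blast
  show "{} \<in> cyl_semiring" unfolding cyl_semiring_def by blast
  fix a b assume a: "a \<in> cyl_semiring" and b: "b \<in> cyl_semiring"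
  show "a \<inter> b \<in> cyl_semiring" by (rule cyl_semiring_Int[OF a b])
  from b show "\<exists>C\<subseteq>cyl_semiring. finite C \<and> disjoint C \<and> a - b = \<Union>C"
  proof (cases rule: cyl_semiringE)
    case 1
    then show ?thesis using a by (intro exI[of _ "{a}"]) auto
  next
    case (2 J A)
    then show ?thesis using cyl_semiring_Diff_cyl[OF _ _ _ a] by simp
  qed
qed

sublocale cyl_sr: semiring_of_sets PX cyl_semiring
  by (rule semiring_of_sets_cyl)

sublocale cyl_gr: ring_of_sets PX cyl_sr.generated_ring
  by (rule cyl_sr.generating_ring)

lemma PX_in_cylinders: "PX \<in> cylinders L Xs Rs"
  unfolding cylinders_eq using cyl_empty[of "\<lambda>_. {}"] by force

lemma cylinder_ring_eq_generated_ring: "CR = cyl_sr.generated_ring"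
proof
  have "ring_closed cyl_sr.generated_ring"
    unfolding ring_closed_def using cyl_gr.Un cyl_gr.Int cyl_gr.Diff by blast
  moreover have "cylinders L Xs Rs \<subseteq> cyl_sr.generated_ring"
    using cyl_sr.generated_ringI_Basic unfolding cyl_semiring_def by blast
  ultimately show "CR \<subseteq> cyl_sr.generated_ring"
    unfolding cylinder_ring_def ring_generated_def by blast
next
  show "cyl_sr.generated_ring \<subseteq> CR"
    unfolding cylinder_ring_def ring_generated_def
  proof (intro Inter_greatest subsetI)
    fix Q a assume "Q \<in> {R. cylinders L Xs Rs \<subseteq> R \<and> ring_closed R}" "a \<in> cyl_sr.generated_ring"
    then have Q: "cylinders L Xs Rs \<subseteq> Q" "ring_closed Q" and a: "a \<in> cyl_sr.generated_ring"
      by simp_all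
    have "{} \<in> Q" using Q PX_in_cylinders unfolding ring_closed_def by (metis Diff_cancel subsetD)
    then have semiring_Q: "cyl_semiring \<subseteq> Q" using Q(1) unfolding cyl_semiring_def by blast
    obtain C where C: "finite C" "disjoint C" "C \<subseteq> cyl_semiring" "a = \<Union>C"
      using a by (rule cyl_sr.generated_ringE)
    from C(1,3) have "\<Union>C \<in> Q"
    proof (induction C rule: finite_induct)
      case (insert c C)
      then have "c \<in> Q" "\<Union>C \<in> Q" using semiring_Q by auto
      then show ?case using Q(2) unfolding ring_closed_def by simp
    qed (simp add: \<open>{} \<in> Q\<close>)
    then show "a \<in> Q" using C(4) by simp
  qed
qed

lemma CR_Un: "A \<in> CR \<Longrightarrow> B \<in> CR \<Longrightarrow> A \<union> B \<in> CR"
  and CR_Int: "A \<in> CR \<Longrightarrow> B \<in> CR \<Longrightarrow> A \<inter> B \<in> CR"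
  and CR_Diff: "A \<in> CR \<Longrightarrow> B \<in> CR \<Longrightarrow> A - B \<in> CR"
  and CR_subset: "A \<in> CR \<Longrightarrow> A \<subseteq> PX"
  unfolding cylinder_ring_eq_generated_ring
  by (fact cyl_gr.Un cyl_gr.Int cyl_gr.Diff cyl_gr.sets_into_space)+

lemma semiring_in_CR: "Z \<in> cyl_semiring \<Longrightarrow> Z \<in> CR"
  unfolding cylinder_ring_eq_generated_ring by (rule cyl_sr.generated_ringI_Basic)

lemma PX_in_CR: "PX \<in> CR"
  using semiring_in_CR PX_in_cylinders unfolding cyl_semiring_def by blast

lemma empty_in_CR: "{} \<in> CR"
  using CR_Diff[OF PX_in_CR PX_in_CR] by simp

lemma CR_disjoint_decomposition:
  assumes "A \<in> CR"
  obtains C where "finite C" "C \<subseteq> cyl_semiring" "disjoint C" "A = \<Union>C"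
  using assms unfolding cylinder_ring_eq_generated_ring by (elim cyl_sr.generated_ringE) blast

end

section \<open>Cylindrical distributions\<close>

locale cylindrical_distribution = nonarch_abs av for av :: "'k::field \<Rightarrow> real" +
  fixes L :: "'i set" and Xs :: "'i \<Rightarrow> 'a set" and Rs :: "'i \<Rightarrow> 'a set set"
    and mus :: "'i \<Rightarrow> 'a set \<Rightarrow> 'k" and mu :: "('i \<Rightarrow> 'a) set \<Rightarrow> 'k"
  assumes prob_components: "\<And>j. j \<in> L \<Longrightarrow> is_prob_measure av (Xs j) (Rs j) (mus j)"
    and mu_additive: "\<And>A B. A \<in> cylinder_ring L Xs Rs \<Longrightarrow> B \<in> cylinder_ring L Xs Rs \<Longrightarrow>
      A \<inter> B = {} \<Longrightarrow> mu (A \<union> B) = mu A + mu B"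
    and mu_cylinder: "\<And>J A. finite J \<Longrightarrow> J \<subseteq> L \<Longrightarrow> (\<forall>j\<in>J. A j \<in> Rs j) \<Longrightarrow>
      mu (PiE L Xs \<inter> (\<Inter>j\<in>J. {x. x j \<in> A j})) = (\<Prod>j\<in>J. mus j (A j))"
begin

lemma component: "j \<in> L \<Longrightarrow> nonarch_prob_space av (Xs j) (Rs j) (mus j)"
  using prob_components by unfold_locales

sublocale cylinder_space L Xs Rs
  using nonarch_prob_space.prob_measureD(1,5)[OF component] by unfold_locales

lemma mu_cyl: "admissible J A \<Longrightarrow> mu (cyl J A) = (\<Prod>j\<in>J. mus j (A j))"
  unfolding cyl_def using mu_cylinder by blast

lemma mu_empty: "mu {} = 0"
  using mu_additive[OF empty_in_CR empty_in_CR] add_left_cancel[of "mu {}" 0 "mu {}"] by simp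

lemma mu_PX: "mu PX = 1"
  using mu_cyl[of "{}"] by (simp add: cyl_empty)

lemma mu_Union:
  "finite C \<Longrightarrow> C \<subseteq> cyl_semiring \<Longrightarrow> disjoint C \<Longrightarrow> mu (\<Union>C) = (\<Sum>Z\<in>C. mu Z)"
proof (induction C rule: finite_induct)
  case (insert c C)
  then have "disjoint C" by (simp add: pairwise_insert)
  moreover have "c \<inter> \<Union>C = {}" using insert by (auto simp: pairwise_insert disjnt_def)
  moreover have "\<Union>C \<in> CR"
    unfolding cylinder_ring_eq_generated_ring
    using insert \<open>disjoint C\<close> by (intro cyl_sr.generated_ringI) auto
  ultimately show ?case
    using insert mu_additive[OF semiring_in_CR, of c "\<Union>C"] by simp
qed (simp add: mu_empty)

lemma av_mu_cyl_le:
  assumes JA: "admissible J A" and k: "k \<in> J"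
  shows "av (mu (cyl J A)) \<le> av (mus k (A k))"
proof -
  have "mu (cyl J A) = mus k (A k) * (\<Prod>j\<in>J - {k}. mus j (A j))"
    using mu_cyl[OF JA] JA k by (simp add: prod.remove)
  moreover have "av (\<Prod>j\<in>J - {k}. mus j (A j)) \<le> 1"
    using JA nonarch_prob_space.av_mu_le_1[OF component] by (intro av_prod_le_1) auto
  ultimately show ?thesis by (simp add: av_mult mult_left_le av_nonneg)
qed

lemma av_mu_le_1: "A \<in> CR \<Longrightarrow> av (mu A) \<le> 1"
proof (elim CR_disjoint_decomposition)
  fix C assume C: "finite C" "C \<subseteq> cyl_semiring" "disjoint C" "A = \<Union>C"
  have "av (mu Z) \<le> 1" if "Z \<in> cyl_semiring" for Z
    using that
  proof (cases rule: cyl_semiringE)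
    case (2 J A)
    then show ?thesis
      using nonarch_prob_space.av_mu_le_1[OF component] mu_cyl by (auto intro!: av_prod_le_1)
  qed (simp add: mu_empty)
  then show "av (mu A) \<le> 1" using C mu_Union av_sum_le[of C 1 mu] by auto
qed

lemma av_mu_le_component_nrm:
  assumes k: "k \<in> L" and D: "D \<in> Rs k" and W: "W \<in> CR" "W \<subseteq> proj_vimage k D"
  shows "av (mu W) \<le> set_norm av (Rs k) (mus k) D"
proof -
  interpret K: nonarch_prob_space av "Xs k" "Rs k" "mus k" by (rule component[OF k])
  obtain C where C: "finite C" "C \<subseteq> cyl_semiring" "disjoint C" "W = \<Union>C"
    using W(1) by (rule CR_disjoint_decomposition)
  have "av (mu Z) \<le> K.nrm D" if Z: "Z \<in> C" for Z
  proof -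
    have "Z \<in> cyl_semiring" using C(2) Z by blast
    then show ?thesis
  proof (cases rule: cyl_semiringE)
    case 1
    then show ?thesis using K.nrm_nonneg[OF D] by (simp add: mu_empty)
  next
    case (2 J A)
    let ?A = "\<lambda>j. (if j \<in> J then A j else Xs j) \<inter> (if j \<in> {k} then D else Xs j)"
    have adm: "admissible (J \<union> {k}) ?A"
      using admissible_Int[OF 2(1), of "{k}" "\<lambda>_. D"] k D by simp
    have "Z = cyl J A \<inter> cyl {k} (\<lambda>_. D)"
      using 2(2) Z C(4) W(2) by (auto simp: cyl_singleton)
    then have "Z = cyl (J \<union> {k}) ?A" using cyl_Int 2(1) k by simp
    then have "av (mu Z) \<le> av (mus k (?A k))" using av_mu_cyl_le[OF adm, of k] by simp
    also have "\<dots> \<le> K.nrm D"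
      using adm by (intro K.av_mu_le_nrm[OF D]) auto
    finally show ?thesis .
  qed
  qed
  then have "av (\<Sum>Z\<in>C. mu Z) \<le> K.nrm D" by (intro av_sum_le C(1) K.nrm_nonneg[OF D])
  then show ?thesis using mu_Union C by simp
qed

definition small :: "real \<Rightarrow> ('i \<Rightarrow> 'a) set \<Rightarrow> bool" where
  "small e F \<longleftrightarrow> F \<in> CR \<and> (\<forall>W\<in>CR. W \<subseteq> F \<longrightarrow> av (mu W) \<le> e)"

lemma small_empty: "0 \<le> e \<Longrightarrow> small e {}"
  unfolding small_def using empty_in_CR by (auto simp: mu_empty)

lemma small_Un:
  assumes F1: "small e F1" and F2: "small e F2"
  shows "small e (F1 \<union> F2)"
  unfolding small_def
proof (intro conjI ballI impI)
  have F: "F1 \<in> CR" "F2 \<in> CR" using F1 F2 unfolding small_def by blast+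
  then show "F1 \<union> F2 \<in> CR" by (rule CR_Un)
  fix W assume W: "W \<in> CR" "W \<subseteq> F1 \<union> F2"
  have "mu W = mu (W \<inter> F1) + mu (W - F1)"
    using mu_additive[OF CR_Int[OF W(1) F(1)] CR_Diff[OF W(1) F(1)]]
    by (simp add: Int_Diff_Un Int_Diff_disjoint)
  moreover have "av (mu (W \<inter> F1)) \<le> e" using F1 CR_Int[OF W(1) F(1)] unfolding small_def by blast
  moreover have "av (mu (W - F1)) \<le> e" using F2 CR_Diff[OF W(1) F(1)] W(2) unfolding small_def by blast
  ultimately show "av (mu W) \<le> e" using av_add_le_max[of "mu (W \<inter> F1)" "mu (W - F1)"] by simp
qed

lemma ultrafilter_on_component_point:
  assumes U: "ultrafilter_on PX U" and e: "e > 0" and k: "k \<in> L"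
    and not_small: "\<And>F. F \<in> U \<Longrightarrow> \<not> small e F"
  obtains y where "y \<in> Xs k" "\<And>D. D \<in> Rs k \<Longrightarrow> proj_vimage k D \<in> U \<Longrightarrow> y \<in> D"
proof -
  interpret K: nonarch_prob_space av "Xs k" "Rs k" "mus k" by (rule component[OF k])
  let ?V = "{D. D \<subseteq> Xs k \<and> proj_vimage k D \<in> U}"
  have V: "ultrafilter_on (Xs k) ?V"
    using k by (intro ultrafilter_on_vimage[OF U]) (auto simp: PiE_iff)
  have "e < K.nrm D" if D: "D \<in> Rs k" "D \<in> ?V" for D
  proof -
    have "proj_vimage k D \<in> CR" using semiring_in_CR[OF proj_vimage_in_semiring[OF k D(1)]] .
    then obtain W where "W \<in> CR" "W \<subseteq> proj_vimage k D" "\<not> av (mu W) \<le> e"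
      using not_small D(2) unfolding small_def by blast
    then show ?thesis using av_mu_le_component_nrm[OF k D(1)] by force
  qed
  then obtain y where "y \<in> Xs k" "\<And>D. D \<in> Rs k \<Longrightarrow> D \<in> ?V \<Longrightarrow> y \<in> D"
    using K.ultrafilter_on_common_point[OF V e] by blast
  then show ?thesis using that Rs_subset[OF k] by blast
qed

lemma mem_CR_in_ultrafilter:
  assumes U: "ultrafilter_on PX U" and x: "x \<in> PX"
    and coord: "\<And>j D. j \<in> L \<Longrightarrow> D \<in> Rs j \<Longrightarrow> proj_vimage j D \<in> U \<Longrightarrow> x j \<in> D"
    and B: "B \<in> CR" "B \<in> U"
  shows "x \<in> B"
proof -
  obtain C where C: "finite C" "C \<subseteq> cyl_semiring" "disjoint C" "B = \<Union>C"
    using B(1) by (rule CR_disjoint_decomposition)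
  then obtain Z where Z: "Z \<in> C" "Z \<in> U"
    using ultrafilter_on_finite_Union[OF U C(1)] cyl_semiring_subset B(2) by blast
  have "Z \<in> cyl_semiring" using Z(1) C(2) by blast
  then show ?thesis
  proof (cases rule: cyl_semiringE)
    case 1
    then show ?thesis using ultrafilter_on_Int_ne[OF U Z(2) Z(2)] by simp
  next
    case (2 J A)
    have "x j \<in> A j" if j: "j \<in> J" for j
    proof -
      have "Z \<subseteq> proj_vimage j (A j)" using 2(2) j unfolding cyl_def by blast
      then have "proj_vimage j (A j) \<in> U" using ultrafilter_on_mono[OF U Z(2)] by blast
      then show ?thesis using coord 2(1) j by blast
    qed
    then have "x \<in> Z" using x 2(2) unfolding cyl_def by blast
    then show ?thesis using Z(1) C(4) by blast
  qed
qed

lemma ultrafilter_on_common_point_CR: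
  assumes U: "ultrafilter_on PX U" and e: "e > 0" and not_small: "\<And>F. F \<in> U \<Longrightarrow> \<not> small e F"
  obtains x where "x \<in> PX" "\<And>B. B \<in> CR \<Longrightarrow> B \<in> U \<Longrightarrow> x \<in> B"
proof -
  have coord_point: "\<exists>y. y \<in> Xs k \<and> (\<forall>D\<in>Rs k. proj_vimage k D \<in> U \<longrightarrow> y \<in> D)"
    if k: "k \<in> L" for k
    by (rule ultrafilter_on_component_point[OF U e k not_small]) (auto 0 3)
  define x where "x k = (if k \<in> L then SOME y. y \<in> Xs k \<and>
    (\<forall>D\<in>Rs k. proj_vimage k D \<in> U \<longrightarrow> y \<in> D) else undefined)" for k
  have x: "x k \<in> Xs k \<and> (\<forall>D\<in>Rs k. proj_vimage k D \<in> U \<longrightarrow> x k \<in> D)" if "k \<in> L" for k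
    unfolding x_def using someI_ex[OF coord_point[OF that]] that by simp
  have "x \<in> PX" using x unfolding x_def by (auto simp: PiE_iff extensional_def)
  then show ?thesis using that mem_CR_in_ultrafilter[OF U] x by blast
qed

lemma mu_continuous:
  assumes S: "S \<subseteq> CR" "shrinking S" "\<Inter>S = {}" and e: "e > 0"
  shows "\<exists>B\<in>S. \<forall>A\<in>S. A \<subseteq> B \<longrightarrow> av (mu A) \<le> e"
proof (rule ccontr)
  assume contra: "\<not> ?thesis"
  define T where "T = {PX - F | F. small e F}"
  have "shrinking T"
    unfolding shrinking_def
  proof (intro ballI)
    fix B1 B2 assume "B1 \<in> T" "B2 \<in> T"
    then obtain F1 F2 where F: "small e F1" "B1 = PX - F1" "small e F2" "B2 = PX - F2"
      unfolding T_def by blast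
    then have "PX - (F1 \<union> F2) \<in> T"
      unfolding T_def using small_Un by (intro CollectI exI[of _ "F1 \<union> F2"]) simp
    moreover have "PX - (F1 \<union> F2) \<subseteq> B1 \<inter> B2" using F(2,4) by blast
    ultimately show "\<exists>C\<in>T. C \<subseteq> B1 \<inter> B2" ..
  qed
  moreover have "PX - {} \<in> T"
    unfolding T_def using small_empty e by (intro CollectI exI[of _ "{}"]) simp
  then have "T \<noteq> {}" by blast
  moreover have "PX \<inter> A \<inter> B \<noteq> {}" if A: "A \<in> S" and B: "B \<in> T" for A B
  proof -
    obtain F where F: "small e F" "B = PX - F" using B unfolding T_def by blast
    obtain A' where A': "A' \<in> S" "A' \<subseteq> A" "\<not> av (mu A') \<le> e" using contra A by auto
    then have "\<not> A' \<subseteq> F" using F(1) S(1) unfolding small_def by blast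
    then show ?thesis using A'(1,2) S(1) CR_subset F(2) by blast
  qed
  moreover have "S \<noteq> {}" using S(3) by auto
  ultimately have "fip PX (S \<union> T)" using fip_Un_shrinking[OF S(2)] by blast
  then obtain U where U: "ultrafilter_on PX U" "S \<union> T \<subseteq> U" by (rule ultrafilter_on_extends)
  have not_small: "\<not> small e F" if "F \<in> U" for F
  proof
    assume "small e F"
    then have "PX - F \<in> U" using U(2) unfolding T_def by blast
    then show False using ultrafilter_on_Int_ne[OF U(1) \<open>F \<in> U\<close>] by blast
  qed
  obtain x where "x \<in> PX" "\<And>B. B \<in> CR \<Longrightarrow> B \<in> U \<Longrightarrow> x \<in> B"
    using ultrafilter_on_common_point_CR[OF U(1) e not_small] by blast
  then have "x \<in> \<Inter>S" using S(1) U(2) by blast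
  then show False using S(3) by blast
qed

theorem prob_measure_cylinder_ring: "is_prob_measure av PX CR mu"
proof -
  have "covering_ring PX CR"
    unfolding covering_ring_def ring_closed_def
  proof (intro conjI ballI)
    show "CR \<subseteq> Pow PX" using CR_subset by blast
    show "\<Union>CR = PX" using CR_subset PX_in_CR by blast
  qed (simp_all add: CR_Un CR_Int CR_Diff)
  moreover have "\<forall>A\<in>CR. bdd_above {av (mu B) | B. B \<in> CR \<and> B \<subseteq> A}"
    using av_mu_le_1 by (auto intro: bdd_aboveI[of _ 1])
  moreover have "set_norm av CR mu PX = 1"
    unfolding set_norm_def using PX_in_CR mu_PX av_mu_le_1 by (intro cSup_eq_maximum) force+
  moreover have "\<forall>S. S \<subseteq> CR \<and> shrinking S \<and> \<Inter>S = {} \<longrightarrow>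
      (\<forall>e>0. \<exists>B\<in>S. \<forall>A\<in>S. A \<subseteq> B \<longrightarrow> av (mu A) \<le> e)"
    using mu_continuous by blast
  moreover have "\<forall>A\<in>CR. \<forall>B\<in>CR. A \<inter> B = {} \<longrightarrow> mu (A \<union> B) = mu A + mu B"
    using mu_additive by blast
  ultimately show ?thesis
    unfolding is_prob_measure_def is_measure_def using PX_in_CR mu_PX by blast
qed

end

theorem theorem2p8:
  fixes p :: nat and av :: "'k::field \<Rightarrow> real"
    and L :: "'i set" and Xs :: "'i \<Rightarrow> 'a set" and Rs :: "'i \<Rightarrow> 'a set set"
    and mus :: "'i \<Rightarrow> 'a set \<Rightarrow> 'k" and mu :: "('i \<Rightarrow> 'a) set \<Rightarrow> 'k"
  assumes K: "nonarch_field_over_Qp p av"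
    and prob: "\<And>j. j \<in> L \<Longrightarrow> is_prob_measure av (Xs j) (Rs j) (mus j)"
    and complete: "\<And>j. j \<in> L \<Longrightarrow> Rs j = completion av (Xs j) (Rs j) (mus j)"
    and hausdorff: "\<And>j. j \<in> L \<Longrightarrow> Hausdorff_space (ring_topology (Rs j))"
    and additive: "\<And>A B. A \<in> cylinder_ring L Xs Rs \<Longrightarrow> B \<in> cylinder_ring L Xs Rs \<Longrightarrow>
                     A \<inter> B = {} \<Longrightarrow> mu (A \<union> B) = mu A + mu B"
    and cyl: "\<And>J A. finite J \<Longrightarrow> J \<subseteq> L \<Longrightarrow> (\<forall>j\<in>J. A j \<in> Rs j) \<Longrightarrow>
                mu (PiE L Xs \<inter> (\<Inter>j\<in>J. {x. x j \<in> A j})) = (\<Prod>j\<in>J. mus j (A j))"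
  shows "\<exists>nu. is_prob_measure av (PiE L Xs)
                 (completion av (PiE L Xs) (cylinder_ring L Xs Rs) mu) nu
             \<and> (\<forall>A\<in>cylinder_ring L Xs Rs. nu A = mu A)"
proof -
  have "nonarch_abs av" using K by (rule nonarch_abs_if_over_Qp)
  then interpret cylindrical_distribution av L Xs Rs mus mu
    using prob additive cyl by (simp add: cylindrical_distribution_def cylindrical_distribution_axioms_def)
  interpret P: nonarch_prob_space av "PiE L Xs" "cylinder_ring L Xs Rs" mu
    by unfold_locales (rule prob_measure_cylinder_ring)
  show ?thesis using P.prob_measure_completion P.mu_ext_eq_mu by blast
qed

end
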